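(* Let $A$ be an open interval with $0\notin A$, let $n\ge 1$ be an integer, and let $f:A\to(0,\infty)$ be $n$ times differentiable on $A$. Then for every $x\in A$, $$f^{*(n)}(x)=\left(\prod_{j=1}^{n}\bigl(f^{\pi(j)}(x)\bigr)^{(-1)^{n-j}s(n,j)}\right)^{\frac{1}{x^{n}}},$$ where $s(n,j)$ denotes the unsigned Stirling numbers of the first kind.
   Context: For a positive differentiable function $g$, the geometric multiplicative derivative is $g^{*}(x)=\lim_{h\to0}\bigl(g(x+h)/g(x)\bigr)^{1/h}=\exp\{g'(x)/g(x)\}$, and the Bigeometric derivative is $g^{\pi}(x)=\lim_{h\to0}\bigl(g((1+h)x)/g(x)\bigr)^{1/h}=\exp\{x\,g'(x)/g(x)\}$. Higher-order derivatives are defined by iteration: $f^{*(0)}=f$, $f^{*(k+1)}=(f^{*(k)})^{*}$, and $f^{\pi(0)}=f$, $f^{\pi(k+1)}=(f^{\pi(k)})^{\pi}$. The unsigned Stirling numbers of the first kind $s(n,j)$ satisfy $s(0,0)=1$, $s(n,0)=0$ for $n\ge1$, and $s(n+1,j)=n\,s(n,j)+s(n,j-1)$. *)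

theory Defs
  imports "HOL-Analysis.Analysis" "HOL-Combinatorics.Stirling"
begin

definition gstar :: "(real \<Rightarrow> real) \<Rightarrow> real \<Rightarrow> real" where
  "gstar g = (\<lambda>x. exp (deriv g x / g x))"

definition gpi :: "(real \<Rightarrow> real) \<Rightarrow> real \<Rightarrow> real" where
  "gpi g = (\<lambda>x. exp (x * deriv g x / g x))"

definition gstar_n :: "nat \<Rightarrow> (real \<Rightarrow> real) \<Rightarrow> real \<Rightarrow> real" where
  "gstar_n k f = (gstar ^^ k) f"

definition gpi_n :: "nat \<Rightarrow> (real \<Rightarrow> real) \<Rightarrow> real \<Rightarrow> real" where
  "gpi_n k f = (gpi ^^ k) f"

end

theory Submission
  imports Defs
begin

text \<open>
  Put g = ln f and let \<open>\<theta> h x = x h'(x)\<close> be the Euler operator. Then the k-th geometric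
  derivative of f is exp (D^k g) and the k-th bigeometric derivative is exp (\<theta>^k g), so the
  theorem is the exponentiated operator identity x^n D^n = \<Sum>_j (-1)^(n-j) s(n,j) \<theta>^j.
  That identity follows by induction on n from x^(n+1) D^(n+1) = (\<theta> - n) x^n D^n and the
  recurrence of the Stirling numbers.
\<close>

fun times_differentiable_on :: "nat \<Rightarrow> (real \<Rightarrow> real) \<Rightarrow> real set \<Rightarrow> bool" where
  "times_differentiable_on 0 g A \<longleftrightarrow> True"
| "times_differentiable_on (Suc k) g A \<longleftrightarrow>
     (\<forall>x\<in>A. g differentiable (at x)) \<and> times_differentiable_on k (deriv g) A"

lemma times_differentiable_on_iff:
  "times_differentiable_on n g A \<longleftrightarrow> (\<forall>k<n. \<forall>x\<in>A. (deriv ^^ k) g differentiable (at x))"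
proof (induction n arbitrary: g)
  case (Suc n)
  have "(deriv ^^ Suc k) g = (deriv ^^ k) (deriv g)" for k
    by (simp only: funpow_Suc_right comp_def)
  then show ?case
    by (auto simp: Suc.IH less_Suc_eq_0_disj)
qed simp

lemma times_differentiable_on_Suc_imp:
  "times_differentiable_on (Suc k) g A \<Longrightarrow> times_differentiable_on k g A"
  by (induction k arbitrary: g) auto

lemma times_differentiable_on_cong:
  assumes "open A" "\<And>y. y \<in> A \<Longrightarrow> g y = h y" "times_differentiable_on k g A"
  shows "times_differentiable_on k h A"
  using assms(2,3)
proof (induction k arbitrary: g h)
  case (Suc k)
  have g: "\<forall>x\<in>A. g differentiable (at x)" "times_differentiable_on k (deriv g) A"
    using Suc.prems(2) by simp_all
  have h: "(h has_real_derivative deriv g x) (at x)" if "x \<in> A" for x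
  proof -
    have "(g has_real_derivative deriv g x) (at x)"
      using g(1) that DERIV_deriv_iff_real_differentiable by blast
    then show ?thesis
      by (rule has_field_derivative_transform_within_open[OF _ assms(1) that]) (rule Suc.prems(1))
  qed
  have "times_differentiable_on k (deriv h) A"
    by (rule Suc.IH[OF _ g(2)]) (metis h DERIV_imp_deriv)
  moreover have "\<forall>x\<in>A. h differentiable (at x)"
    using h real_differentiable_def by blast
  ultimately show ?case by simp
qed simp

lemma times_differentiable_on_SucI:
  assumes "open A" "\<And>x. x \<in> A \<Longrightarrow> (g has_real_derivative g' x) (at x)"
    and "times_differentiable_on k g' A"
  shows "times_differentiable_on (Suc k) g A"
proof -
  have "times_differentiable_on k (deriv g) A"
    by (rule times_differentiable_on_cong[OF assms(1) _ assms(3)]) (metis assms(2) DERIV_imp_deriv)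
  moreover have "\<forall>x\<in>A. g differentiable (at x)"
    using assms(2) real_differentiable_def by blast
  ultimately show ?thesis by simp
qed

lemma times_differentiable_on_const: "times_differentiable_on k (\<lambda>_. c) A"
proof (induction k arbitrary: c)
  case (Suc k)
  have "deriv (\<lambda>_. c) = (\<lambda>_. 0::real)" by (intro ext DERIV_imp_deriv) auto
  then show ?case using Suc by simp
qed simp

lemma times_differentiable_on_ident: "times_differentiable_on k (\<lambda>x. x) A"
proof (cases k)
  case (Suc k)
  have "deriv (\<lambda>x. x) = (\<lambda>_. 1::real)" by (intro ext DERIV_imp_deriv) auto
  then show ?thesis using Suc by (simp add: times_differentiable_on_const)
qed simp

lemma times_differentiable_on_add:
  assumes "open A"
  shows "times_differentiable_on k g A \<Longrightarrow> times_differentiable_on k h A \<Longrightarrow>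
    times_differentiable_on k (\<lambda>y. g y + h y) A"
proof (induction k arbitrary: g h)
  case (Suc k)
  show ?case
    by (rule times_differentiable_on_SucI[OF assms, where g' = "\<lambda>y. deriv g y + deriv h y"])
       (use Suc in \<open>auto intro!: derivative_eq_intros DERIV_deriv_iff_real_differentiable[THEN iffD2]\<close>)
qed simp

lemma times_differentiable_on_mult:
  assumes "open A"
  shows "times_differentiable_on k g A \<Longrightarrow> times_differentiable_on k h A \<Longrightarrow>
    times_differentiable_on k (\<lambda>y. g y * h y) A"
proof (induction k arbitrary: g h)
  case (Suc k)
  show ?case
    by (rule times_differentiable_on_SucI[OF assms,
          where g' = "\<lambda>y. deriv g y * h y + g y * deriv h y"])
       (use Suc times_differentiable_on_Suc_imp in
         \<open>auto intro!: derivative_eq_intros DERIV_deriv_iff_real_differentiable[THEN iffD2]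
                       times_differentiable_on_add[OF assms]\<close>)
qed simp

lemma times_differentiable_on_inverse:
  assumes "open A" "\<And>y. y \<in> A \<Longrightarrow> g y \<noteq> 0"
  shows "times_differentiable_on k g A \<Longrightarrow> times_differentiable_on k (\<lambda>y. inverse (g y)) A"
proof (induction k)
  case (Suc k)
  show ?case
  proof (rule times_differentiable_on_SucI[OF assms(1)])
    fix x assume "x \<in> A"
    then show "((\<lambda>y. inverse (g y)) has_real_derivative
        (-1) * deriv g x * inverse (g x) * inverse (g x)) (at x)"
      using Suc.prems assms(2)
      by (auto intro!: derivative_eq_intros DERIV_deriv_iff_real_differentiable[THEN iffD2]
               simp: power2_eq_square)
  next
    show "times_differentiable_on k (\<lambda>y. (-1) * deriv g y * inverse (g y) * inverse (g y)) A"
      using Suc times_differentiable_on_Suc_imp[OF Suc.prems]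
      by (intro times_differentiable_on_mult[OF assms(1)] times_differentiable_on_const) simp_all
  qed
qed simp

lemma times_differentiable_on_ln:
  assumes "open A" "\<And>y. y \<in> A \<Longrightarrow> g y > 0" "times_differentiable_on k g A"
  shows "times_differentiable_on k (\<lambda>y. ln (g y)) A"
proof (cases k)
  case (Suc k')
  show ?thesis
    unfolding Suc
  proof (rule times_differentiable_on_SucI[OF assms(1)])
    fix x assume "x \<in> A"
    then show "((\<lambda>y. ln (g y)) has_real_derivative deriv g x * inverse (g x)) (at x)"
      using assms Suc
      by (auto intro!: derivative_eq_intros DERIV_deriv_iff_real_differentiable[THEN iffD2]
               simp: divide_inverse)
  next
    have "\<And>y. y \<in> A \<Longrightarrow> g y \<noteq> 0"
      using assms(2) by force
    then show "times_differentiable_on k' (\<lambda>y. deriv g y * inverse (g y)) A"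
      using assms Suc times_differentiable_on_Suc_imp
      by (auto intro!: times_differentiable_on_mult times_differentiable_on_inverse)
  qed
qed simp

definition euler_deriv :: "(real \<Rightarrow> real) \<Rightarrow> real \<Rightarrow> real" where
  "euler_deriv h = (\<lambda>y. y * deriv h y)"

lemma times_differentiable_on_euler_deriv:
  "open A \<Longrightarrow> times_differentiable_on (Suc k) h A \<Longrightarrow> times_differentiable_on k (euler_deriv h) A"
  unfolding euler_deriv_def by (intro times_differentiable_on_mult times_differentiable_on_ident) auto

lemma times_differentiable_on_euler_deriv_funpow:
  assumes "open A" "times_differentiable_on n g A"
  shows "j \<le> n \<Longrightarrow> times_differentiable_on (n - j) ((euler_deriv ^^ j) g) A"
proof (induction j)
  case (Suc j)
  then have "times_differentiable_on (Suc (n - Suc j)) ((euler_deriv ^^ j) g) A"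
    by (simp add: Suc_diff_Suc)
  then show ?case
    using times_differentiable_on_euler_deriv[OF assms(1)] by simp
qed (simp add: assms(2))

lemma alternating_stirling_sum_Suc:
  fixes T :: "nat \<Rightarrow> real"
  shows "(\<Sum>j\<le>Suc m. (-1)^j * real (stirling (Suc m) j) * T j) =
    real m * (\<Sum>j\<le>m. (-1)^j * real (stirling m j) * T j)
      - (\<Sum>j\<le>m. (-1)^j * real (stirling m j) * T (Suc j))"
proof -
  define F where "F j = (-1)^j * real (stirling m j) * T j" for j
  have "real m * F 0 = 0" by (cases m) (auto simp: F_def)
  moreover have "(\<Sum>j\<le>m. F j) = F 0 + (\<Sum>j\<le>m. F (Suc j))"
    using sum.atMost_Suc_shift[of F m] by (simp add: F_def)
  moreover have "(\<Sum>j\<le>Suc m. (-1)^j * real (stirling (Suc m) j) * T j) =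
      (\<Sum>j\<le>m. real m * F (Suc j) - (-1)^j * real (stirling m j) * T (Suc j))"
    by (subst sum.atMost_Suc_shift) (auto intro!: sum.cong simp: F_def algebra_simps)
  ultimately show ?thesis
    by (simp add: F_def sum_subtractf sum_distrib_left algebra_simps)
qed

lemma alternating_stirling_sum_euler_deriv_funpow:
  assumes "open A" "times_differentiable_on m g A" "x \<in> A"
  shows "(\<Sum>j\<le>m. (-1)^j * real (stirling m j) * (euler_deriv ^^ j) g x)
    = (-1)^m * x^m * (deriv ^^ m) g x"
  using assms(2,3)
proof (induction m arbitrary: x)
  case (Suc m)
  define c where "c j = (-1)^j * real (stirling m j)" for j
  define E where "E y = (\<Sum>j\<le>m. c j * (euler_deriv ^^ j) g y)" for y
  have g: "times_differentiable_on m g A"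
    using Suc.prems(1) by (rule times_differentiable_on_Suc_imp)
  have E_eq: "E y = (-1)^m * y^m * (deriv ^^ m) g y" if "y \<in> A" for y
    using Suc.IH[OF g that] by (simp add: E_def c_def)
  have "(euler_deriv ^^ j) g differentiable (at x)" if "j \<le> m" for j
  proof -
    have "times_differentiable_on (Suc m - j) ((euler_deriv ^^ j) g) A"
      using that by (intro times_differentiable_on_euler_deriv_funpow[OF assms(1) Suc.prems(1)]) simp
    then show ?thesis using that Suc.prems(2) by (simp add: Suc_diff_le)
  qed
  then have "(E has_real_derivative (\<Sum>j\<le>m. c j * deriv ((euler_deriv ^^ j) g) x)) (at x)"
    unfolding E_def
    by (auto intro!: derivative_eq_intros DERIV_deriv_iff_real_differentiable[THEN iffD2]
             simp: mult.commute)
  then have "x * deriv E x = (\<Sum>j\<le>m. c j * (euler_deriv ^^ Suc j) g x)"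
    by (simp add: DERIV_imp_deriv euler_deriv_def sum_distrib_left algebra_simps)
  moreover
  have "(deriv ^^ m) g differentiable (at x)"
    using Suc.prems by (simp add: times_differentiable_on_iff)
  then have "((\<lambda>y. (-1)^m * y^m * (deriv ^^ m) g y) has_real_derivative
      (-1)^m * (real m * x^(m-1) * (deriv ^^ m) g x + x^m * (deriv ^^ Suc m) g x)) (at x)"
    by (auto intro!: derivative_eq_intros DERIV_deriv_iff_real_differentiable[THEN iffD2]
             simp: algebra_simps)
  then have "(E has_real_derivative
      (-1)^m * (real m * x^(m-1) * (deriv ^^ m) g x + x^m * (deriv ^^ Suc m) g x)) (at x)"
    by (rule has_field_derivative_transform_within_open[OF _ assms(1) Suc.prems(2)])
       (simp add: E_eq)
  then have "x * deriv E x = real m * E x + (-1)^m * x^Suc m * (deriv ^^ Suc m) g x"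
    using E_eq[OF Suc.prems(2)] by (cases m) (simp_all add: DERIV_imp_deriv algebra_simps)
  ultimately have "(\<Sum>j\<le>m. c j * (euler_deriv ^^ Suc j) g x)
      = real m * E x + (-1)^m * x^Suc m * (deriv ^^ Suc m) g x"
    by simp
  then show ?case
    using alternating_stirling_sum_Suc[of m "\<lambda>j. (euler_deriv ^^ j) g x"]
    by (simp add: E_def c_def algebra_simps)
qed simp

lemma signed_stirling_sum_euler_deriv_funpow:
  assumes "open A" "times_differentiable_on n g A" "x \<in> A" "n \<ge> 1"
  shows "(\<Sum>j=1..n. (-1)^(n-j) * real (stirling n j) * (euler_deriv ^^ j) g x)
    = x^n * (deriv ^^ n) g x"
proof -
  have sign: "(-1::real)^(n-j) = (-1)^n * (-1)^j" if "j \<le> n" for j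
    using that by (simp add: power_diff_conv_inverse)
  have "{..n} = insert 0 {1..n}" by auto
  then have "(\<Sum>j=1..n. (-1)^(n-j) * real (stirling n j) * (euler_deriv ^^ j) g x)
      = (-1)^n * (\<Sum>j\<le>n. (-1)^j * real (stirling n j) * (euler_deriv ^^ j) g x)"
    using assms(4) by (simp add: sum_distrib_left sign mult.assoc)
  also have "\<dots> = x^n * (deriv ^^ n) g x"
    using alternating_stirling_sum_euler_deriv_funpow[OF assms(1-3)]
    by (simp flip: mult.assoc power_mult_distrib)
  finally show ?thesis .
qed

lemma deriv_div_eq_deriv_exponent:
  fixes P L :: "real \<Rightarrow> real"
  assumes "open A" "x \<in> A" "\<And>y. y \<in> A \<Longrightarrow> P y = exp (L y)" "L differentiable (at x)"
  shows "deriv P x / P x = deriv L x"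
proof -
  have "((\<lambda>y. exp (L y)) has_real_derivative exp (L x) * deriv L x) (at x)"
    using assms(4)
    by (auto intro!: derivative_eq_intros DERIV_deriv_iff_real_differentiable[THEN iffD2])
  then have "(P has_real_derivative exp (L x) * deriv L x) (at x)"
    by (rule has_field_derivative_transform_within_open[OF _ assms(1,2)]) (simp add: assms(3))
  then show ?thesis
    using assms(2,3) by (simp add: DERIV_imp_deriv)
qed

lemma gstar_n_eq_exp_deriv_ln:
  assumes "open A" "\<And>y. y \<in> A \<Longrightarrow> f y > 0" "times_differentiable_on n (\<lambda>y. ln (f y)) A"
  shows "k \<le> n \<Longrightarrow> x \<in> A \<Longrightarrow> gstar_n k f x = exp ((deriv ^^ k) (\<lambda>y. ln (f y)) x)"
proof (induction k arbitrary: x)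
  case 0
  then show ?case using assms(2) by (simp add: gstar_n_def)
next
  case (Suc k)
  have "deriv (gstar_n k f) x / gstar_n k f x = deriv ((deriv ^^ k) (\<lambda>y. ln (f y))) x"
    using Suc assms(3)
    by (intro deriv_div_eq_deriv_exponent[OF assms(1)]) (auto simp: times_differentiable_on_iff)
  then show ?case by (simp add: gstar_n_def gstar_def)
qed

lemma gpi_n_eq_exp_euler_deriv_ln:
  assumes "open A" "\<And>y. y \<in> A \<Longrightarrow> f y > 0" "times_differentiable_on n (\<lambda>y. ln (f y)) A"
  shows "k \<le> n \<Longrightarrow> x \<in> A \<Longrightarrow> gpi_n k f x = exp ((euler_deriv ^^ k) (\<lambda>y. ln (f y)) x)"
proof (induction k arbitrary: x)
  case 0
  then show ?case using assms(2) by (simp add: gpi_n_def)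
next
  case (Suc k)
  have "times_differentiable_on (Suc (n - Suc k)) ((euler_deriv ^^ k) (\<lambda>y. ln (f y))) A"
    using times_differentiable_on_euler_deriv_funpow[OF assms(1,3), of k] Suc.prems
    by (simp add: Suc_diff_Suc)
  then have "deriv (gpi_n k f) x / gpi_n k f x = deriv ((euler_deriv ^^ k) (\<lambda>y. ln (f y))) x"
    using Suc by (intro deriv_div_eq_deriv_exponent[OF assms(1)]) auto
  then show ?case
    by (simp add: gpi_n_def gpi_def euler_deriv_def[of "(euler_deriv ^^ k) (\<lambda>y. ln (f y))"]
             flip: times_divide_eq_right)
qed

theorem theorem2:
  fixes A :: "real set" and f :: "real \<Rightarrow> real" and n :: nat
  assumes "is_interval A" and "open A" and "A \<noteq> {}" and "0 \<notin> A"
    and "n \<ge> 1"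
    and "\<And>x. x \<in> A \<Longrightarrow> f x > 0"
    and "\<And>k x. k < n \<Longrightarrow> x \<in> A \<Longrightarrow> (deriv ^^ k) f differentiable (at x)"
    and "x \<in> A"
  shows "gstar_n n f x =
    (\<Prod>j=1..n. (gpi_n j f x) powr ((-1) ^ (n - j) * real (stirling n j))) powr (1 / x ^ n)"
proof -
  define g where "g = (\<lambda>y. ln (f y))"
  have "times_differentiable_on n g A"
    unfolding g_def using assms(2,6,7)
    by (intro times_differentiable_on_ln) (auto simp: times_differentiable_on_iff)
  note g = this this[unfolded g_def]
  have gstar: "gstar_n n f x = exp ((deriv ^^ n) g x)"
    using gstar_n_eq_exp_deriv_ln[OF assms(2,6) g(2) _ assms(8)] by (simp add: g_def)
  have gpi: "gpi_n j f x = exp ((euler_deriv ^^ j) g x)" if "j \<le> n" for j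
    using gpi_n_eq_exp_euler_deriv_ln[OF assms(2,6) g(2) that assms(8)] by (simp add: g_def)
  have "(\<Prod>j=1..n. (gpi_n j f x) powr ((-1) ^ (n - j) * real (stirling n j)))
      = exp (\<Sum>j=1..n. (-1) ^ (n - j) * real (stirling n j) * (euler_deriv ^^ j) g x)"
    by (simp add: gpi exp_sum powr_def mult.commute)
  also have "\<dots> = exp (x^n * (deriv ^^ n) g x)"
    using signed_stirling_sum_euler_deriv_funpow[OF assms(2) g(1) assms(8,5)] by simp
  also have "\<dots> = gstar_n n f x powr (x^n)"
    by (simp add: gstar powr_def mult.commute)
  finally have "(\<Prod>j=1..n. (gpi_n j f x) powr ((-1) ^ (n - j) * real (stirling n j)))
      = gstar_n n f x powr (x^n)" .
  moreover have "x \<noteq> 0"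
    using assms(4,8) by auto
  ultimately show ?thesis
    by (simp add: gstar powr_powr)
qed

end
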